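(* For every integer $n \geq 3$, the number $c_3(n)$ of cyclic permutations of length $n$ in the $\sigma$-class with signature $\sigma_3 = +-+$ satisfies \[ c_3(n) = \frac{L_3^*(n;\sigma_3)}{4}. \]
   Context: $\mathcal S_n$ is the set of permutations of $[n]=\{1,\dots,n\}$, written in one-line notation $\pi=\pi_1\cdots\pi_n$. A permutation is cyclic if its cycle decomposition consists of a single $n$-cycle; $\mathcal C_n$ is the set of cyclic permutations in $\mathcal S_n$. For a signature $\sigma=\sigma^0\sigma^1\cdots\sigma^{k-1}\in\{+,-\}^k$, the $\sigma$-class $\mathcal S^\sigma_n$ is the set of $\pi\in\mathcal S_n$ for which there exist integers $0=e_0\le e_1\le\cdots\le e_k=n$ such that for each $i\in\{0,\dots,k-1\}$ the segment $\pi_{e_i+1}\pi_{e_i+2}\cdots\pi_{e_{i+1}}$ is increasing if $\sigma^i=+$ and decreasing if $\sigma^i=-$. Set $\mathcal C_n^\sigma=\mathcal C_n\cap\mathcal S_n^\sigma$ and $c_3(n)=|\mathcal C_n^{+-+}|$. A word of length $m$ on $k$ letters is a sequence $s=s_1\cdots s_m$ with $s_j\in\{0,1,\dots,k-1\}$; it is primitive if it is not of the form $q^r$ (concatenation of $r$ copies of a word $q$) for any $r>1$. A necklace is an equivalence class of words under cyclic rotation; it is primitive if its representatives are primitive. $L_k(m)$ denotes the number of primitive necklaces of length $m$ on $k$ letters. For $\sigma\in\{+,-\}^k$ let $T_\sigma^-=\{i:\sigma^i=-\}$ and for a word $s$ let $o_\sigma(s)=|\{j: s_j\in T_\sigma^-\}|$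 (this is invariant under rotation). $L_k(m;\sigma)$ denotes the number of primitive necklaces of length $m$ on $k$ letters whose representatives $s$ have $o_\sigma(s)$ odd, with the convention $L_k(m;\sigma)=0$ if $m$ is not an integer. Finally $L_k^*(n;\sigma)=L_k(n)+L_k(\tfrac n2;\sigma)$ (so $L_k^*(n;\sigma)=L_k(n)$ when $n$ is odd). *)

theory Defs
  imports Complex_Main "HOL-Combinatorics.Permutations"
begin

text \<open>Permutations of [n] = {1..n} are functions nat => nat that permute {1..n};
  pi j is the j-th entry of the one-line notation.\<close>

definition cyclic_perm :: "nat \<Rightarrow> (nat \<Rightarrow> nat) \<Rightarrow> bool" where
  "cyclic_perm n \<pi> \<longleftrightarrow> \<pi> permutes {1..n} \<and>
     (\<forall>x\<in>{1..n}. \<forall>y\<in>{1..n}. \<exists>k. (\<pi> ^^ k) x = y)"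

text \<open>Signatures: lists of bool, True = +, False = -.\<close>

definition in_sigma_class :: "bool list \<Rightarrow> nat \<Rightarrow> (nat \<Rightarrow> nat) \<Rightarrow> bool" where
  "in_sigma_class \<sigma> n \<pi> \<longleftrightarrow> \<pi> permutes {1..n} \<and>
     (\<exists>e::nat \<Rightarrow> nat. e 0 = 0 \<and> e (length \<sigma>) = n \<and>
        (\<forall>i<length \<sigma>. e i \<le> e (Suc i)) \<and>
        (\<forall>i<length \<sigma>. \<forall>j. e i < j \<and> j < e (Suc i) \<longrightarrow>
            (if \<sigma> ! i then \<pi> j < \<pi> (Suc j) else \<pi> (Suc j) < \<pi> j)))"

definition cyc_class_count :: "bool list \<Rightarrow> nat \<Rightarrow> nat" where
  "cyc_class_count \<sigma> n = card {\<pi>. cyclic_perm n \<pi> \<and> in_sigma_class \<sigma> n \<pi>}"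

definition c3 :: "nat \<Rightarrow> nat" where
  "c3 n = cyc_class_count [True, False, True] n"

definition words :: "nat \<Rightarrow> nat \<Rightarrow> nat list set" where
  "words k m = {w. length w = m \<and> set w \<subseteq> {0..<k}}"

definition primitive_word :: "'a list \<Rightarrow> bool" where
  "primitive_word w \<longleftrightarrow> \<not> (\<exists>q r. r > 1 \<and> w = concat (replicate r q))"

definition necklace :: "'a list \<Rightarrow> 'a list set" where
  "necklace w = {rotate i w | i. True}"

definition primitive_necklaces :: "nat \<Rightarrow> nat \<Rightarrow> nat list set set" where
  "primitive_necklaces k m = necklace ` {w \<in> words k m. primitive_word w}"

definition L :: "nat \<Rightarrow> nat \<Rightarrow> nat" where
  "L k m = card (primitive_necklaces k m)"

definition T_minus :: "bool list \<Rightarrow> nat set" where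
  "T_minus \<sigma> = {i. i < length \<sigma> \<and> \<not> \<sigma> ! i}"

definition o_sigma :: "bool list \<Rightarrow> nat list \<Rightarrow> nat" where
  "o_sigma \<sigma> s = card {j. j < length s \<and> s ! j \<in> T_minus \<sigma>}"

text \<open>L_k(m;sigma) for integer m; the non-integer case is handled in L_star.\<close>
definition L_sig :: "nat \<Rightarrow> nat \<Rightarrow> bool list \<Rightarrow> nat" where
  "L_sig k m \<sigma> = card {N \<in> primitive_necklaces k m. \<forall>s\<in>N. odd (o_sigma \<sigma> s)}"

definition L_star :: "nat \<Rightarrow> nat \<Rightarrow> bool list \<Rightarrow> nat" where
  "L_star k n \<sigma> = L k n + (if even n then L_sig k (n div 2) \<sigma> else 0)"

end

theory Submission
  imports Defs "HOL-Combinatorics.Cycles"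
begin

text \<open>A triple \<open>(p, a, b)\<close> of a cyclic permutation \<open>p\<close> of \<open>[n]\<close> in the class \<open>+-+\<close> and cut
  points \<open>a \<le> b\<close> of a compatible segmentation is encoded by the necklace of the itinerary of
  the point 1: the word recording, along the orbit, whether each point lies in the first, middle
  or last segment. Each such \<open>p\<close> has exactly four segmentations, since its descents form a
  nonempty interval whose two end cuts can each be moved by one. The encoding is injective,
  because the relative order of the orbit points is recovered from their itineraries by an
  alternating lexicographic order (letter 1, the decreasing segment, flips the comparison).
  Its image consists of the primitive necklaces of length \<open>n\<close> together with the necklaces of
  words \<open>q @ q\<close> where \<open>q\<close> is primitive with an odd number of ones, and the latter are counted by
  \<open>L_3(n/2; +-+)\<close>.\<close>

section \<open>Cyclic permutations\<close>

lemma strict_mono_selfmap_id: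
  fixes f :: "'a::linorder \<Rightarrow> 'a"
  assumes fin: "finite S" and maps: "f ` S \<subseteq> S"
    and mono: "\<And>x y. x \<in> S \<Longrightarrow> y \<in> S \<Longrightarrow> x < y \<Longrightarrow> f x < f y"
    and x: "x \<in> S"
  shows "f x = x"
proof -
  have inj: "inj_on f S"
    by (rule inj_onI) (metis mono linorder_neqE less_irrefl)
  have img: "f ` S = S" using card_image[OF inj] card_subset_eq[OF fin maps] by simp
  have below: "f ` {y\<in>S. y < x} = {z\<in>S. z < f x}"
  proof
    show "f ` {y\<in>S. y < x} \<subseteq> {z\<in>S. z < f x}" using maps mono x by auto
    show "{z\<in>S. z < f x} \<subseteq> f ` {y\<in>S. y < x}"
    proof
      fix z assume z: "z \<in> {z\<in>S. z < f x}"
      then obtain y where y: "y \<in> S" "z = f y" using img by auto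
      have "y < x" using mono[OF x y(1)] z y by (metis mem_Collect_eq not_less_iff_gr_or_eq less_asym)
      then show "z \<in> f ` {y\<in>S. y < x}" using y by auto
    qed
  qed
  have c: "card {y\<in>S. y < x} = card {z\<in>S. z < f x}"
    using below card_image inj_on_subset[OF inj] by (metis (no_types, lifting) mem_Collect_eq subsetI)
  show ?thesis
  proof (rule ccontr)
    assume "f x \<noteq> x"
    then consider "x < f x" | "f x < x" using linorder_neqE by blast
    then show False
    proof cases
      case 1
      then have "{y\<in>S. y < x} \<subset> {z\<in>S. z < f x}" using x by auto
      then have "card {y\<in>S. y < x} < card {z\<in>S. z < f x}" using fin by (intro psubset_card_mono) auto
      with c show False by simp
    next
      case 2
      then have "{z\<in>S. z < f x} \<subset> {y\<in>S. y < x}" using maps x by auto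
      then have "card {z\<in>S. z < f x} < card {y\<in>S. y < x}" using fin by (intro psubset_card_mono) auto
      with c show False by simp
    qed
  qed
qed

lemma cyclic_perm_permutes: "cyclic_perm n p \<Longrightarrow> p permutes {1..n}"
  by (simp add: cyclic_perm_def)

lemma cyclic_perm_funpow_in: "cyclic_perm n p \<Longrightarrow> x \<in> {1..n} \<Longrightarrow> (p ^^ k) x \<in> {1..n}"
  by (metis cyclic_perm_permutes permutes_funpow permutes_in_image)

lemma cyclic_perm_orbit:
  assumes cyc: "cyclic_perm n p" and x: "x \<in> {1..n}"
  shows cyclic_perm_funpow_self: "(p ^^ n) x = x"
    and cyclic_perm_orbit_bij: "bij_betw (\<lambda>k. (p ^^ k) x) {0..<n} {1..n}"
proof -
  have reach: "\<And>y. y \<in> {1..n} \<Longrightarrow> \<exists>k. (p ^^ k) x = y"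
    using cyc x unfolding cyclic_perm_def by auto
  have "p x \<in> {1..n}" using cyclic_perm_funpow_in[OF cyc x, of 1] by simp
  then obtain k0 where "(p ^^ k0) (p x) = x" using cyc x unfolding cyclic_perm_def by blast
  then have ex: "(p ^^ Suc k0) x = x" by (metis funpow_Suc_right comp_apply)
  define P where "P = (LEAST q. 0 < q \<and> (p ^^ q) x = x)"
  have P: "0 < P" "(p ^^ P) x = x" using LeastI[of "\<lambda>q. 0 < q \<and> (p ^^ q) x = x" "Suc k0"] ex
    unfolding P_def by auto
  have Pmin: "\<And>q. 0 < q \<Longrightarrow> q < P \<Longrightarrow> (p ^^ q) x \<noteq> x"
    using not_less_Least P_def by blast
  have "(p ^^ i) x \<noteq> (p ^^ j) x" if "i < j" "j < P" for i j
  proof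
    assume e: "(p ^^ i) x = (p ^^ j) x"
    have "(p ^^ (P - j + i)) x = (p ^^ (P - j)) ((p ^^ i) x)" by (simp add: funpow_add)
    also have "\<dots> = (p ^^ (P - j + j)) x" using e by (simp add: funpow_add)
    also have "\<dots> = x" using P that by simp
    finally show False using Pmin[of "P - j + i"] that by linarith
  qed
  then have inj: "inj_on (\<lambda>k. (p ^^ k) x) {0..<P}"
    by (intro inj_onI) (metis atLeastLessThan_iff linorder_neqE_nat)
  have img: "(\<lambda>k. (p ^^ k) x) ` {0..<P} = {1..n}"
  proof
    show "(\<lambda>k. (p ^^ k) x) ` {0..<P} \<subseteq> {1..n}" using cyclic_perm_funpow_in[OF cyc x] by auto
    show "{1..n} \<subseteq> (\<lambda>k. (p ^^ k) x) ` {0..<P}"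
    proof
      fix y assume "y \<in> {1..n}"
      then obtain k where "(p ^^ k) x = y" using reach by blast
      then have "(p ^^ (k mod P)) x = y" using funpow_mod_eq[where f = p and n = P and x = x] P by simp
      then show "y \<in> (\<lambda>k. (p ^^ k) x) ` {0..<P}" using P by force
    qed
  qed
  have "P = n" using card_image[OF inj] img by simp
  then show "(p ^^ n) x = x" "bij_betw (\<lambda>k. (p ^^ k) x) {0..<n} {1..n}"
    using P inj img by (auto simp: bij_betw_def)
qed

lemma cyclic_perm_funpow_inj:
  assumes "cyclic_perm n p" "x \<in> {1..n}" "i < n" "j < n" "(p ^^ i) x = (p ^^ j) x"
  shows "i = j"
  using bij_betw_imp_inj_on[OF cyclic_perm_orbit_bij[OF assms(1,2)]] assms(3-5)
  by (auto dest: inj_onD)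

section \<open>Segmentations for the signature \<open>+-+\<close>\<close>

text \<open>The cut points \<open>e\<^sub>1 = a\<close> and \<open>e\<^sub>2 = b\<close> of a segmentation for the signature \<open>+-+\<close>.\<close>

definition pmp_segmentation :: "nat \<Rightarrow> (nat \<Rightarrow> nat) \<Rightarrow> nat \<Rightarrow> nat \<Rightarrow> bool" where
  "pmp_segmentation n p a b \<longleftrightarrow> a \<le> b \<and> b \<le> n \<and>
     (\<forall>j. 0 < j \<and> j < a \<longrightarrow> p j < p (Suc j)) \<and>
     (\<forall>j. a < j \<and> j < b \<longrightarrow> p (Suc j) < p j) \<and>
     (\<forall>j. b < j \<and> j < n \<longrightarrow> p j < p (Suc j))"

lemma in_pmp_class_iff:
  "in_sigma_class [True, False, True] n p \<longleftrightarrow> p permutes {1..n} \<and> (\<exists>a b. pmp_segmentation n p a b)"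
proof
  assume h: "in_sigma_class [True, False, True] n p"
  then obtain e where e0: "e 0 = 0" "e (length [True, False, True]) = n"
    "\<forall>i<length [True, False, True]. e i \<le> e (Suc i)"
    "\<forall>i<length [True, False, True]. \<forall>j. e i < j \<and> j < e (Suc i) \<longrightarrow>
            (if [True, False, True] ! i then p j < p (Suc j) else p (Suc j) < p j)"
    unfolding in_sigma_class_def by blast
  have "length [True, False, True] = 3" by simp
  note e = e0[unfolded this]
  have "pmp_segmentation n p (e 1) (e 2)"
    unfolding pmp_segmentation_def using e(3)[rule_format, of 0] e(3)[rule_format, of 1]
      e(3)[rule_format, of 2] e(4)[rule_format, of 0] e(4)[rule_format, of 1]
      e(4)[rule_format, of 2] e(1,2)
    by (auto simp: numeral_3_eq_3 numeral_2_eq_2)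
  then show "p permutes {1..n} \<and> (\<exists>a b. pmp_segmentation n p a b)"
    using h unfolding in_sigma_class_def by auto
next
  assume "p permutes {1..n} \<and> (\<exists>a b. pmp_segmentation n p a b)"
  then obtain a b where p: "p permutes {1..n}" and v: "pmp_segmentation n p a b" by auto
  define e where "e = (\<lambda>i::nat. if i = 0 then 0 else if i = 1 then a else if i = 2 then b else n)"
  have "\<forall>i<3. e i \<le> e (Suc i)" using v unfolding pmp_segmentation_def e_def
    by (auto simp: less_Suc_eq numeral_3_eq_3)
  moreover have "\<forall>i<3. \<forall>j. e i < j \<and> j < e (Suc i) \<longrightarrow>
            (if [True, False, True] ! i then p j < p (Suc j) else p (Suc j) < p j)"
    using v unfolding pmp_segmentation_def e_def by (auto simp: less_Suc_eq numeral_3_eq_3)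
  moreover have "e 0 = 0" "e 3 = n" by (simp_all add: e_def)
  moreover have l3: "length [True, False, True] = 3" by simp
  ultimately show "in_sigma_class [True, False, True] n p"
    unfolding in_sigma_class_def l3 using p by blast
qed

lemma increasing_run:
  fixes f :: "nat \<Rightarrow> nat"
  assumes "\<And>j. lo < j \<Longrightarrow> j < hi \<Longrightarrow> f j < f (Suc j)" "lo < x" "x < y" "y \<le> hi"
  shows "f x < f y"
  using assms(3,4)
proof (induction y)
  case (Suc y)
  then show ?case
    using assms(1,2) by (cases "x = y") (auto intro: order.strict_trans)
qed simp

lemma decreasing_run:
  fixes f :: "nat \<Rightarrow> nat"
  assumes "\<And>j. lo < j \<Longrightarrow> j < hi \<Longrightarrow> f (Suc j) < f j" "lo < x" "x < y" "y \<le> hi"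
  shows "f y < f x"
  using assms(3,4)
proof (induction y)
  case (Suc y)
  show ?case
  proof (cases "x = y")
    case False
    then have "f y < f x" using Suc by auto
    moreover have "f (Suc y) < f y" using assms(1,2) Suc False by auto
    ultimately show ?thesis by simp
  qed (use assms(1,2) Suc in auto)
qed simp

definition descents :: "nat \<Rightarrow> (nat \<Rightarrow> nat) \<Rightarrow> nat set" where
  "descents n p = {j. 1 \<le> j \<and> j < n \<and> p (Suc j) < p j}"

lemma pmp_segmentation_iff_descents:
  assumes "p permutes {1..n}"
  shows "pmp_segmentation n p a b \<longleftrightarrow> a \<le> b \<and> b \<le> n \<and>
    (\<forall>j. 0 < j \<and> j < a \<longrightarrow> j \<notin> descents n p) \<and> (\<forall>j. a < j \<and> j < b \<longrightarrow> j \<in> descents n p) \<and>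
    (\<forall>j. b < j \<and> j < n \<longrightarrow> j \<notin> descents n p)"
proof -
  have neq: "p j \<noteq> p (Suc j)" for j using permutes_inj[OF assms] by (metis injD n_not_Suc_n)
  have asc: "j \<notin> descents n p \<longleftrightarrow> p j < p (Suc j)" if "0 < j" "j < n" for j
    using that neq[of j] by (auto simp: descents_def)
  have runs: "(\<forall>j. lo < j \<and> j < hi \<longrightarrow> j \<notin> descents n p) \<longleftrightarrow> (\<forall>j. lo < j \<and> j < hi \<longrightarrow> p j < p (Suc j))"
    if "hi \<le> n" for lo hi using asc that by (meson le0 le_less_trans less_le_trans)
  have desc: "(\<forall>j. a < j \<and> j < b \<longrightarrow> j \<in> descents n p) \<longleftrightarrow> (\<forall>j. a < j \<and> j < b \<longrightarrow> p (Suc j) < p j)"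
    if "b \<le> n" using that by (auto simp: descents_def)
  show ?thesis
  proof (cases "a \<le> b \<and> b \<le> n")
    case True
    then have "a \<le> n" by simp
    then show ?thesis
      unfolding pmp_segmentation_def runs[where lo = 0 and hi = a, OF \<open>a \<le> n\<close>] runs[where lo = b and hi = n, OF order_refl] desc[OF conjunct2[OF True]]
      using True by simp
  qed (auto simp: pmp_segmentation_def)
qed

lemma cyclic_perm_descents_nonempty:
  assumes cyc: "cyclic_perm n p" and n: "2 \<le> n"
  shows "descents n p \<noteq> {}"
proof
  assume none: "descents n p = {}"
  have perm: "p permutes {1..n}" using cyc by (rule cyclic_perm_permutes)
  have "pmp_segmentation n p 0 0" using none by (simp add: pmp_segmentation_iff_descents[OF perm])
  then have inc: "\<And>j. 0 < j \<Longrightarrow> j < n \<Longrightarrow> p j < p (Suc j)"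
    by (simp add: pmp_segmentation_def)
  have "p x = x" if "x \<in> {1..n}" for x
  proof (rule strict_mono_selfmap_id[of "{1..n}" p])
    show "p ` {1..n} \<subseteq> {1..n}" using perm by (simp add: permutes_image)
    fix x y assume "x \<in> {1..n}" "y \<in> {1..n}" "x < y"
    then show "p x < p y" using increasing_run[of 0 n p x y, OF inc] by auto
  qed (use that in auto)
  then have "(p ^^ k) 1 = 1" for k using n by (induction k) simp_all
  moreover obtain k where "(p ^^ k) 1 = 2"
    using cyc n unfolding cyclic_perm_def by force
  ultimately show False by simp
qed

lemma descents_interval:
  assumes perm: "p permutes {1..n}" and seg: "pmp_segmentation n p a b"
    and ne: "descents n p \<noteq> {}"
  shows "descents n p = {Min (descents n p)..Max (descents n p)}"
proof -
  let ?D = "descents n p"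
  have fin: "finite ?D" unfolding descents_def by auto
  note seg' = seg[unfolded pmp_segmentation_iff_descents[OF perm]]
  have out: "\<forall>j. 0 < j \<and> j < a \<longrightarrow> j \<notin> ?D" "\<forall>j. b < j \<and> j < n \<longrightarrow> j \<notin> ?D"
    using seg' by blast+
  have inside: "a \<le> j \<and> j \<le> b" if "j \<in> ?D" for j
  proof -
    have "0 < j" "j < n" using that by (auto simp: descents_def)
    then show ?thesis using out that by (meson not_le)
  qed
  have between: "j \<in> ?D" if "Min ?D \<le> j" "j \<le> Max ?D" for j
  proof (cases "j = Min ?D \<or> j = Max ?D")
    case False
    then have "a < j" "j < b"
      using that inside[OF Min_in[OF fin ne]] inside[OF Max_in[OF fin ne]] by auto
    then show ?thesis using seg' by blast
  qed (use Min_in[OF fin ne] Max_in[OF fin ne] in auto)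
  show ?thesis
  proof (intro equalityI subsetI)
    fix j assume "j \<in> ?D"
    then show "j \<in> {Min ?D..Max ?D}" using fin by (simp add: Min_le Max_ge)
  qed (use between in auto)
qed

lemma pmp_segmentations_eq:
  assumes perm: "p permutes {1..n}" and D: "descents n p = {P..Q}" and PQ: "P \<le> Q"
  shows "{(a, b). pmp_segmentation n p a b} = {P - 1, P} \<times> {Q, Suc Q}"
proof -
  have PQ': "1 \<le> P" "Q < n" using D PQ by (auto simp: descents_def set_eq_iff)
  note iff = pmp_segmentation_iff_descents[OF perm, unfolded D]
  have "pmp_segmentation n p a b \<longleftrightarrow> (a, b) \<in> {P - 1, P} \<times> {Q, Suc Q}" for a b
  proof
    assume "pmp_segmentation n p a b"
    then have s: "a \<le> b" "\<forall>j. 0 < j \<and> j < a \<longrightarrow> j \<notin> {P..Q}"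
      "\<forall>j. a < j \<and> j < b \<longrightarrow> j \<in> {P..Q}" "\<forall>j. b < j \<and> j < n \<longrightarrow> j \<notin> {P..Q}"
      unfolding iff by auto
    have "a \<le> P" by (cases "a \<le> P") (use s(2)[rule_format, of P] PQ PQ' in auto)
    moreover have "Q \<le> b" by (cases "Q \<le> b") (use s(4)[rule_format, of Q] PQ PQ' in auto)
    moreover have "P - 1 \<le> a"
    proof (rule ccontr)
      assume "\<not> P - 1 \<le> a"
      then have "P - 1 \<in> {P..Q}" using s(3) \<open>Q \<le> b\<close> PQ by auto
      then show False using PQ' by auto
    qed
    moreover have "b \<le> Suc Q"
    proof (rule ccontr)
      assume "\<not> b \<le> Suc Q"
      then have "Suc Q \<in> {P..Q}" using s(3) \<open>a \<le> P\<close> PQ by auto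
      then show False by auto
    qed
    ultimately show "(a, b) \<in> {P - 1, P} \<times> {Q, Suc Q}" by auto
  next
    assume "(a, b) \<in> {P - 1, P} \<times> {Q, Suc Q}"
    then show "pmp_segmentation n p a b" unfolding iff using PQ PQ' by auto
  qed
  then show ?thesis by auto
qed

lemma card_pmp_segmentations:
  assumes cyc: "cyclic_perm n p" and n: "2 \<le> n" and seg: "pmp_segmentation n p a b"
  shows "card {(a, b). pmp_segmentation n p a b} = 4"
proof -
  have perm: "p permutes {1..n}" using cyc by (rule cyclic_perm_permutes)
  let ?D = "descents n p"
  have ne: "?D \<noteq> {}" using cyclic_perm_descents_nonempty[OF cyc n] .
  have fin: "finite ?D" by (simp add: descents_def)
  have "1 \<le> Min ?D" using Min_in[OF fin ne] by (simp add: descents_def)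
  moreover have "Min ?D \<le> Max ?D" using fin ne by (simp add: Min_le Max_in)
  ultimately show ?thesis
    using pmp_segmentations_eq[OF perm descents_interval[OF perm seg ne]]
    by (simp add: card_cartesian_product)
qed

section \<open>Itineraries\<close>

definition segment_letter :: "nat \<Rightarrow> nat \<Rightarrow> nat \<Rightarrow> nat" where
  "segment_letter a b y = (if y \<le> a then 0 else if y \<le> b then 1 else 2)"

lemma segment_letter_mono: "x \<le> y \<Longrightarrow> segment_letter a b x \<le> segment_letter a b y"
  by (auto simp: segment_letter_def)

lemma pmp_segmentation_order:
  assumes seg: "pmp_segmentation n p a b" and x: "x \<in> {1..n}" and y: "y \<in> {1..n}" and xy: "x < y"
    and same: "segment_letter a b x = segment_letter a b y"
  shows "if segment_letter a b x = 1 then p y < p x else p x < p y"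
proof -
  have ab: "a \<le> b" "b \<le> n" using seg by (auto simp: pmp_segmentation_def)
  consider "y \<le> a" | "a < x" "y \<le> b" | "b < x"
    using same xy unfolding segment_letter_def by (auto split: if_splits)
  then show ?thesis
  proof cases
    case 1
    then have "p x < p y" using increasing_run[of 0 a p x y] seg x xy
      unfolding pmp_segmentation_def by auto
    then show ?thesis using 1 xy by (auto simp: segment_letter_def)
  next
    case 2
    then have "p y < p x" using decreasing_run[of a b p x y] seg xy
      unfolding pmp_segmentation_def by auto
    then show ?thesis using 2 xy by (auto simp: segment_letter_def)
  next
    case 3
    then have "p x < p y" using increasing_run[of b n p x y] seg y xy
      unfolding pmp_segmentation_def by auto
    then show ?thesis using 3 xy ab by (auto simp: segment_letter_def)
  qed
qed

fun itinerary :: "(nat \<Rightarrow> nat) \<Rightarrow> nat \<Rightarrow> nat \<Rightarrow> nat \<Rightarrow> nat \<Rightarrow> nat list" where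
  "itinerary p a b 0 x = []"
| "itinerary p a b (Suc k) x = segment_letter a b x # itinerary p a b k (p x)"

lemma length_itinerary [simp]: "length (itinerary p a b k x) = k"
  by (induction k arbitrary: x) auto

lemma nth_itinerary: "j < k \<Longrightarrow> itinerary p a b k x ! j = segment_letter a b ((p ^^ j) x)"
proof (induction k arbitrary: x j)
  case (Suc k)
  then show ?case by (cases j) (simp_all add: funpow_swap1)
qed simp

lemma take_itinerary: "j \<le> k \<Longrightarrow> take j (itinerary p a b k x) = itinerary p a b j x"
  by (rule nth_equalityI) (auto simp: nth_itinerary)

lemma set_itinerary: "set (itinerary p a b k x) \<subseteq> {0..<3}"
  by (induction k arbitrary: x) (auto simp: segment_letter_def)

definition count_ones :: "nat list \<Rightarrow> nat" where
  "count_ones s = length (filter (\<lambda>c. c = 1) s)"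

lemma count_ones_simps [simp]:
  "count_ones [] = 0"
  "count_ones (c # s) = (if c = 1 then Suc (count_ones s) else count_ones s)"
  "count_ones (s @ t) = count_ones s + count_ones t"
  by (auto simp: count_ones_def)

lemma count_ones_rotate [simp]: "count_ones (rotate i s) = count_ones s"
proof -
  let ?k = "i mod length s"
  have "count_ones (rotate i s) = count_ones (drop ?k s) + count_ones (take ?k s)"
    by (simp add: rotate_drop_take)
  also have "\<dots> = count_ones s" by (metis add.commute append_take_drop_id count_ones_simps(3))
  finally show ?thesis .
qed

lemma o_sigma_pmp: "o_sigma [True, False, True] s = count_ones s"
proof -
  have "T_minus [True, False, True] = {1}"
    unfolding T_minus_def by (auto simp: less_Suc_eq numeral_3_eq_3)
  then show ?thesis unfolding o_sigma_def count_ones_def by (simp add: length_filter_conv_card)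
qed

text \<open>The order of points on the same side of a segmentation is read off their itineraries
  lexicographically, except that passing through the decreasing segment (letter 1)
  reverses the comparison of the remaining words.\<close>

function alt_lex_less :: "nat list \<Rightarrow> nat list \<Rightarrow> bool" where
  "alt_lex_less (c # s) (d # t) =
     (if c = d then (if c = 1 then alt_lex_less t s else alt_lex_less s t) else c < d)"
| "alt_lex_less [] _ = False"
| "alt_lex_less (c # s) [] = False"
  by pat_completeness auto
termination by (relation "measure (\<lambda>(s, t). length s + length t)") auto

lemma alt_lex_less_irrefl: "\<not> alt_lex_less s s"
  by (induction s) auto

lemma alt_lex_less_trans:
  "length s = length t \<Longrightarrow> length t = length u \<Longrightarrow> alt_lex_less s t \<Longrightarrow> alt_lex_less t u \<Longrightarrow>
   alt_lex_less s u"
proof (induction "length s" arbitrary: s t u)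
  case (Suc k)
  obtain c s' where s: "s = c # s'" using Suc.hyps(2) by (cases s) auto
  obtain d t' where t: "t = d # t'" using Suc.prems(1) s by (cases t) auto
  obtain e u' where u: "u = e # u'" using Suc.prems(2) t by (cases u) auto
  have "length s' = k" "length t' = k" "length u' = k" using Suc s t u by auto
  then show ?case using Suc.prems(3,4) Suc.hyps(1)[of s' t' u'] Suc.hyps(1)[of u' t' s']
    unfolding s t u by (auto split: if_splits)
qed simp

lemma alt_lex_less_asym: "length s = length t \<Longrightarrow> alt_lex_less s t \<Longrightarrow> \<not> alt_lex_less t s"
  using alt_lex_less_trans alt_lex_less_irrefl by metis

lemma alt_lex_less_total:
  "length s = length t \<Longrightarrow> s \<noteq> t \<Longrightarrow> alt_lex_less s t \<or> alt_lex_less t s"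
proof (induction s arbitrary: t)
  case (Cons c s)
  then obtain d t' where "t = d # t'" by (cases t) auto
  then show ?case using Cons.IH[of t'] Cons.prems by auto
qed simp

lemma alt_lex_less_append:
  "length s = length t \<Longrightarrow> s \<noteq> t \<Longrightarrow> alt_lex_less (s @ u) (t @ v) = alt_lex_less s t"
  by (induction s t arbitrary: u v rule: alt_lex_less.induct) auto

lemma alt_lex_less_Cons_le: "alt_lex_less (c # s) (d # t) \<Longrightarrow> c \<le> d"
  by (auto split: if_splits)

lemma itinerary_order:
  assumes seg: "pmp_segmentation n p a b" and perm: "p permutes {1..n}"
  shows "x \<in> {1..n} \<Longrightarrow> y \<in> {1..n} \<Longrightarrow> x < y \<Longrightarrow>
    itinerary p a b k x = itinerary p a b k y \<or> alt_lex_less (itinerary p a b k x) (itinerary p a b k y)"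
proof (induction k arbitrary: x y)
  case (Suc k)
  have px: "p x \<in> {1..n}" "p y \<in> {1..n}" using Suc.prems(1,2) permutes_in_image[OF perm] by blast+
  show ?case
  proof (cases "segment_letter a b x = segment_letter a b y")
    case same: True
    note order = pmp_segmentation_order[OF seg Suc.prems same]
    show ?thesis
    proof (cases "segment_letter a b x = 1")
      case True
      then show ?thesis using order Suc.IH[OF px(2) px(1)] same by auto
    next
      case False
      then show ?thesis using order Suc.IH[OF px(1) px(2)] same by auto
    qed
  qed (use Suc.prems segment_letter_mono[of x y a b] in auto)
qed simp

lemma itinerary_parity:
  assumes seg: "pmp_segmentation n p a b" and perm: "p permutes {1..n}"
  shows "x \<in> {1..n} \<Longrightarrow> y \<in> {1..n} \<Longrightarrow> x \<noteq> y \<Longrightarrow> itinerary p a b k x = itinerary p a b k y \<Longrightarrow>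
    (p ^^ k) x < (p ^^ k) y \<longleftrightarrow> (x < y \<longleftrightarrow> even (count_ones (itinerary p a b k x)))"
proof (induction k arbitrary: x y)
  case (Suc k)
  have px: "p x \<in> {1..n}" "p y \<in> {1..n}" using Suc.prems(1,2) permutes_in_image[OF perm] by blast+
  have pne: "p x \<noteq> p y" using Suc.prems(3) perm by (metis permutes_inj injD)
  have same: "segment_letter a b x = segment_letter a b y" using Suc.prems(4) by simp
  have step: "p x < p y \<longleftrightarrow> (x < y \<longleftrightarrow> segment_letter a b x \<noteq> 1)"
  proof (cases "x < y")
    case True
    then show ?thesis using pmp_segmentation_order[OF seg Suc.prems(1,2) True same] by auto
  next
    case False
    then have "y < x" using Suc.prems(3) by simp
    then show ?thesis using pmp_segmentation_order[OF seg Suc.prems(2,1) \<open>y < x\<close> same[symmetric]] same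
      by (auto split: if_splits)
  qed
  have "(p ^^ k) (p x) < (p ^^ k) (p y) \<longleftrightarrow>
      (p x < p y \<longleftrightarrow> even (count_ones (itinerary p a b k (p x))))"
    using Suc.IH[OF px pne] Suc.prems(4) by simp
  then show ?case using step same by (auto simp: funpow_swap1)
qed simp

lemma itinerary_funpow:
  assumes cyc: "cyclic_perm n p" and x: "x \<in> {1..n}"
  shows "itinerary p a b n ((p ^^ i) x) = rotate i (itinerary p a b n x)"
proof (rule nth_equalityI)
  fix j assume "j < length (itinerary p a b n ((p ^^ i) x))"
  then have j: "j < n" by simp
  have "itinerary p a b n ((p ^^ i) x) ! j = segment_letter a b ((p ^^ (j + i)) x)"
    using j by (simp add: nth_itinerary funpow_add)
  also have "\<dots> = segment_letter a b ((p ^^ ((i + j) mod n)) x)"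
    using funpow_mod_eq[where f = p and n = n and x = x] cyclic_perm_funpow_self[OF cyc x]
    by (simp add: add.commute)
  also have "\<dots> = rotate i (itinerary p a b n x) ! j"
    using j x by (simp add: nth_rotate nth_itinerary)
  finally show "itinerary p a b n ((p ^^ i) x) ! j = rotate i (itinerary p a b n x) ! j" .
qed simp

lemma card_orbit_indices:
  assumes cyc: "cyclic_perm n p" and x: "x \<in> {1..n}"
  shows "card {k. k < n \<and> P ((p ^^ k) x)} = card {z \<in> {1..n}. P z}"
proof -
  have bij: "bij_betw (\<lambda>k. (p ^^ k) x) {0..<n} {1..n}" by (rule cyclic_perm_orbit_bij[OF cyc x])
  have "inj_on (\<lambda>k. (p ^^ k) x) {k. k < n \<and> P ((p ^^ k) x)}"
    using bij_betw_imp_inj_on[OF bij] by (rule inj_on_subset) auto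
  moreover have "{z \<in> {1..n}. P z} = {z \<in> (\<lambda>k. (p ^^ k) x) ` {0..<n}. P z}"
    using bij_betw_imp_surj_on[OF bij] by simp
  then have "{z \<in> {1..n}. P z} = (\<lambda>k. (p ^^ k) x) ` {k. k < n \<and> P ((p ^^ k) x)}" by auto
  ultimately show ?thesis by (simp add: card_image)
qed

lemma itinerary_letter_counts:
  assumes cyc: "cyclic_perm n p" and seg: "pmp_segmentation n p a b" and x: "x \<in> {1..n}"
  shows "card {k. k < n \<and> itinerary p a b n x ! k = 0} = a"
    and "card {k. k < n \<and> itinerary p a b n x ! k \<le> 1} = b"
proof -
  have ab: "a \<le> b" "b \<le> n" using seg by (auto simp: pmp_segmentation_def)
  have "{k. k < n \<and> itinerary p a b n x ! k = 0} = {k. k < n \<and> (p ^^ k) x \<le> a}"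
    by (auto simp: nth_itinerary segment_letter_def split: if_splits)
  moreover have "{z \<in> {1..n}. z \<le> a} = {1..a}" using ab by auto
  ultimately show "card {k. k < n \<and> itinerary p a b n x ! k = 0} = a"
    using card_orbit_indices[OF cyc x, of "\<lambda>z. z \<le> a"] by simp
  have "{k. k < n \<and> itinerary p a b n x ! k \<le> 1} = {k. k < n \<and> (p ^^ k) x \<le> b}"
    using ab by (auto simp: nth_itinerary segment_letter_def split: if_splits)
  moreover have "{z \<in> {1..n}. z \<le> b} = {1..b}" using ab by auto
  ultimately show "card {k. k < n \<and> itinerary p a b n x ! k \<le> 1} = b"
    using card_orbit_indices[OF cyc x, of "\<lambda>z. z \<le> b"] by simp
qed

text \<open>Rotating the itinerary by \<open>d\<close> corresponds to applying \<open>p ^^ d\<close>, which maps the points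
  sharing the itinerary of \<open>x\<close> to themselves, order-preservingly or order-reversingly
  according to the parity of the number of ones in the first \<open>d\<close> letters. A self-map of a finite
  chain that preserves order is the identity, so the parity must be odd and \<open>p ^^ (2 * d)\<close>
  fixes \<open>x\<close>.\<close>

lemma itinerary_self_rotation:
  assumes cyc: "cyclic_perm n p" and seg: "pmp_segmentation n p a b" and x: "x \<in> {1..n}"
    and rot: "rotate d (itinerary p a b n x) = itinerary p a b n x" and d: "0 < d" "d < n"
  shows "n = 2 * d \<and> odd (count_ones (take d (itinerary p a b n x)))"
proof -
  let ?w = "itinerary p a b n x"
  have perm: "p permutes {1..n}" using cyc by (rule cyclic_perm_permutes)
  define S where "S = {z \<in> {1..n}. itinerary p a b n z = ?w}"
  define g where "g = p ^^ d"
  have finS: "finite S" unfolding S_def by auto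
  have inj_g: "inj g" unfolding g_def using permutes_inj[OF perm] by (rule inj_fn)
  have xS: "x \<in> S" using x unfolding S_def by auto
  have gS: "g ` S \<subseteq> S"
    using itinerary_funpow[OF cyc] cyclic_perm_funpow_in[OF cyc] rot unfolding S_def g_def by auto
  have gord: "g z1 < g z2 \<longleftrightarrow> even (count_ones (take d ?w))"
    if z: "z1 \<in> S" "z2 \<in> S" "z1 < z2" for z1 z2
  proof -
    have "itinerary p a b d z = take d ?w" if "z \<in> S" for z
    proof -
      have "itinerary p a b d z = take d (itinerary p a b n z)" using d by (simp add: take_itinerary)
      also have "\<dots> = take d ?w" using that by (simp add: S_def)
      finally show ?thesis .
    qed
    then show ?thesis using itinerary_parity[OF seg perm, of z1 z2 d] z unfolding S_def g_def by auto
  qed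
  have "g x \<noteq> x"
    using cyclic_perm_funpow_inj[OF cyc x, of d 0] d unfolding g_def by auto
  then have odd: "odd (count_ones (take d ?w))"
    using strict_mono_selfmap_id[OF finS gS _ xS] gord by auto
  have "(g \<circ> g) x = x"
  proof (rule strict_mono_selfmap_id[OF finS _ _ xS])
    show "(g \<circ> g) ` S \<subseteq> S" using gS by auto
    fix z1 z2 assume z: "z1 \<in> S" "z2 \<in> S" "z1 < z2"
    have "g z1 \<noteq> g z2" using inj_g z(3) by (metis injD less_irrefl)
    then have "g z2 < g z1" using gord[OF z] odd by auto
    moreover have "g (g z1) \<noteq> g (g z2)" using inj_g z(3) by (metis injD less_irrefl)
    moreover have "g z1 \<in> S" "g z2 \<in> S" using gS z by auto
    ultimately show "(g \<circ> g) z1 < (g \<circ> g) z2" using gord[of "g z2" "g z1"] odd by auto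
  qed
  then have "(p ^^ ((d + d) mod n)) x = (p ^^ 0) x"
    using funpow_mod_eq[where f = p and n = n and x = x] cyclic_perm_funpow_self[OF cyc x]
    unfolding g_def by (simp add: funpow_add)
  then have "(d + d) mod n = 0" using cyclic_perm_funpow_inj[OF cyc x] d by auto
  then have "n = 2 * d" using d by (cases "d + d < n") (auto simp: le_mod_geq)
  then show ?thesis using odd by simp
qed

section \<open>Rotations, primitive words and necklaces\<close>

lemma length_concat_replicate [simp]: "length (concat (replicate r q)) = r * length q"
  by (induction r) auto

lemma rotate_concat_replicate:
  "0 < r \<Longrightarrow> rotate (length q) (concat (replicate r q)) = concat (replicate r q)"
proof (induction r)
  case (Suc r)
  have "concat (replicate r q) @ q = q @ concat (replicate r q)" by (induction r) auto
  then show ?case by (simp add: rotate_append)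
qed simp

lemma nth_concat_replicate:
  "i < r * length q \<Longrightarrow> concat (replicate r q) ! i = q ! (i mod length q)"
proof (induction r arbitrary: i)
  case (Suc r)
  show ?case
  proof (cases "i < length q")
    case False
    then have "concat (replicate r q) ! (i - length q) = q ! ((i - length q) mod length q)"
      using Suc by (intro Suc.IH) auto
    then show ?thesis using False by (simp add: nth_append le_mod_geq)
  qed (simp add: nth_append)
qed simp

lemma rotate_append_self: "rotate i (q @ q) = rotate i q @ rotate i q"
proof (induction i)
  case (Suc i)
  show ?case
  proof (cases "rotate i q")
    case (Cons e r)
    then show ?thesis using Suc by simp
  qed (use Suc in simp)
qed simp

lemma rotate_fixed_gcd:
  assumes rot: "rotate d w = w"
  shows "rotate (gcd d (length w)) w = w"
proof (cases "d = 0")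
  case False
  let ?n = "length w"
  have mult: "rotate (k * d) w = w" for k
    by (induction k) (simp_all add: rot rotate_rotate[symmetric])
  obtain x y where "d * x = ?n * y + gcd d ?n" using bezout_nat[OF False] by blast
  then have "rotate (gcd d ?n) w = rotate (x * d) w"
    by (metis mod_mult_self3 mult.commute rotate_conv_mod)
  then show ?thesis using mult by simp
qed simp

lemma rotate_fixed_periodic:
  assumes rot: "rotate g w = w" and g: "0 < g" "g dvd length w"
  shows "w = concat (replicate (length w div g) (take g w))"
proof (rule nth_equalityI)
  let ?n = "length w"
  have len: "?n div g * length (take g w) = ?n"
    using g by (cases "?n = 0") (simp_all add: dvd_imp_le min_absorb2)
  then show "length w = length (concat (replicate (?n div g) (take g w)))" by simp
  have step: "w ! (i + g) = w ! i" if "i + g < ?n" for i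
    using nth_rotate[where n = i and m = g and xs = w] rot that by (simp add: add.commute)
  have periodic: "w ! i = w ! (i mod g)" if "i < ?n" for i
    using that
  proof (induction i rule: less_induct)
    case (less i)
    show ?case
    proof (cases "i < g")
      case False
      then have "w ! i = w ! (i - g)" using step[of "i - g"] less.prems by simp
      also have "\<dots> = w ! ((i - g) mod g)" using less.IH[of "i - g"] less.prems g False by simp
      finally show ?thesis using False by (simp add: le_mod_geq)
    qed simp
  qed
  fix i assume i: "i < length w"
  then have "g \<le> ?n" using g by (metis dvd_imp_le gr_implies_not0 neq0_conv)
  then show "w ! i = concat (replicate (?n div g) (take g w)) ! i"
    using nth_concat_replicate[of i "?n div g" "take g w"] len periodic[OF i] g i
    by (simp add: min_absorb2)
qed

lemma rotate_fixed_not_primitive: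
  assumes rot: "rotate d w = w" and d: "0 < d" "d < length w"
  shows "\<not> primitive_word w"
proof -
  let ?n = "length w" and ?g = "gcd d (length w)"
  have g: "0 < ?g" "?g dvd ?n" "?g < ?n" using d by (auto intro: le_less_trans[OF gcd_le1_nat])
  obtain k where k: "?n = ?g * k" using g(2) unfolding dvd_def by blast
  have "k \<noteq> 0" using k d by (metis mult_0_right not_less0)
  moreover have "k \<noteq> 1" using k g(3) by (metis mult.right_neutral less_irrefl)
  moreover have "?n div ?g = k" using k g(1) by (metis nonzero_mult_div_cancel_left not_gr0)
  ultimately have "1 < ?n div ?g" by linarith
  then show ?thesis
    using rotate_fixed_periodic[OF rotate_fixed_gcd[OF rot] g(1,2)] unfolding primitive_word_def by blast
qed

lemma inj_rotate: "inj (rotate k)"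
  unfolding rotate_def by (intro inj_fn inj_rotate1)

lemma rotate_eq_rotate_imp_fixed:
  assumes "i \<le> j" "rotate i w = rotate j w"
  shows "rotate (j - i) w = w"
proof -
  have "rotate i (rotate (j - i) w) = rotate i w" using assms by (simp add: rotate_rotate)
  then show ?thesis using inj_rotate by (metis injD)
qed

lemma rotate_eq_rotate_offset:
  assumes jk: "j < length w" "k < length w" "j \<noteq> k" and eq: "rotate j w = rotate k w"
  obtains d where "0 < d" "d < length w" "rotate d w = w" "(j + d) mod length w = k"
proof -
  let ?n = "length w"
  define d where "d = (k + ?n - j) mod ?n"
  have d: "0 < d" "d < ?n" using jk unfolding d_def by (auto simp: mod_if)
  have dj: "(j + d) mod ?n = k" using jk unfolding d_def by (simp add: mod_add_right_eq)
  have "rotate j (rotate d w) = rotate ((j + d) mod ?n) w"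
    by (metis rotate_conv_mod rotate_rotate add.commute)
  also have "\<dots> = rotate j w" using eq dj by simp
  finally have "rotate d w = w" using inj_rotate by (metis injD)
  then show ?thesis using that d dj by blast
qed

lemma primitive_rotate_inj:
  assumes prim: "primitive_word w" and ij: "i < length w" "j < length w"
    and eq: "rotate i w = rotate j w"
  shows "i = j"
proof (rule ccontr)
  have *: False if "i' < j'" "j' < length w" "rotate i' w = rotate j' w" for i' j'
    using rotate_fixed_not_primitive[OF rotate_eq_rotate_imp_fixed[OF less_imp_le]] that prim
    by (metis diff_le_self le_less_trans zero_less_diff)
  assume "i \<noteq> j"
  then show False using *[of i j] *[of j i] ij eq by (metis linorder_neqE_nat)
qed

lemma not_primitive_append_self: "\<not> primitive_word (q @ q)"
proof -
  have "q @ q = concat (replicate 2 q)" by (simp add: numeral_2_eq_2)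
  then show ?thesis unfolding primitive_word_def by (metis one_less_numeral_iff semiring_norm(76))
qed

lemma necklace_rotate: "necklace (rotate k w) = necklace w"
proof -
  have "rotate i w = rotate (i + length w * k - k) (rotate k w)" for i
  proof (cases "w = []")
    case False
    then have "1 \<le> length w" by (simp add: Suc_le_eq)
    then have "k \<le> length w * k" by simp
    then have "i + length w * k - k + k = i + length w * k" by linarith
    then have "rotate (i + length w * k - k) (rotate k w) = rotate (i + length w * k) w"
      by (simp add: rotate_rotate)
    also have "\<dots> = rotate i w" by (metis rotate_conv_mod mod_mult_self2)
    finally show ?thesis by simp
  qed simp
  then show ?thesis unfolding necklace_def by (auto simp: rotate_rotate)
qed

lemma necklace_eq_iff: "necklace v = necklace w \<longleftrightarrow> (\<exists>i. v = rotate i w)"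
proof
  assume "necklace v = necklace w"
  moreover have "v \<in> necklace v" unfolding necklace_def by (auto intro: exI[of _ 0])
  ultimately show "\<exists>i. v = rotate i w" unfolding necklace_def by auto
qed (auto simp: necklace_rotate)

section \<open>Injectivity of the itinerary encoding\<close>

lemma cyclic_perm_eq_if_orbit_order:
  assumes cyc: "cyclic_perm n p" and cyc': "cyclic_perm n p'"
    and x: "x \<in> {1..n}" and x': "x' \<in> {1..n}"
    and order: "\<And>j k. j < n \<Longrightarrow> k < n \<Longrightarrow> (p ^^ j) x < (p ^^ k) x \<Longrightarrow> (p' ^^ j) x' < (p' ^^ k) x'"
  shows "p = p'"
proof -
  have bij: "bij_betw (\<lambda>k. (p ^^ k) x) {0..<n} {1..n}" by (rule cyclic_perm_orbit_bij[OF cyc x])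
  define idx where "idx = the_inv_into {0..<n} (\<lambda>k. (p ^^ k) x)"
  have idx: "idx z < n" "(p ^^ idx z) x = z" if "z \<in> {1..n}" for z
    using bij_betw_apply[OF bij_betw_the_inv_into[OF bij] that] f_the_inv_into_f_bij_betw[OF bij that]
    unfolding idx_def by simp_all
  have idx_funpow: "idx ((p ^^ k) x) = k" if "k < n" for k
    using that the_inv_into_f_f[OF bij_betw_imp_inj_on[OF bij]] unfolding idx_def by simp
  have same: "(p ^^ k) x = (p' ^^ k) x'" if "k < n" for k
  proof -
    have "(\<lambda>z. (p' ^^ idx z) x') z = z" if "z \<in> {1..n}" for z
    proof (rule strict_mono_selfmap_id[of "{1..n}"])
      show "(\<lambda>z. (p' ^^ idx z) x') ` {1..n} \<subseteq> {1..n}"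
        using cyclic_perm_funpow_in[OF cyc' x'] by auto
      fix z1 z2 assume z: "z1 \<in> {1..n}" "z2 \<in> {1..n}" "z1 < z2"
      show "(p' ^^ idx z1) x' < (p' ^^ idx z2) x'"
        using order[OF idx(1)[OF z(1)] idx(1)[OF z(2)]] idx(2)[OF z(1)] idx(2)[OF z(2)] z(3) by simp
    qed (use that in auto)
    then show ?thesis
      using idx_funpow[OF that] cyclic_perm_funpow_in[OF cyc x, of k] by metis
  qed
  have "p z = p' z" for z
  proof (cases "z \<in> {1..n}")
    case True
    then obtain k where k: "k < n" "z = (p ^^ k) x" using idx by metis
    have "(p ^^ Suc k) x = (p' ^^ Suc k) x'"
    proof (cases "Suc k < n")
      case False
      then have "Suc k = n" using k by simp
      then show ?thesis using cyclic_perm_funpow_self[OF cyc x] cyclic_perm_funpow_self[OF cyc' x']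
          same[of 0] k by simp
    qed (rule same)
    then show ?thesis using k same[OF k(1)] by simp
  next
    case False
    then show ?thesis
      using cyclic_perm_permutes[OF cyc] cyclic_perm_permutes[OF cyc'] by (simp add: permutes_not_in)
  qed
  then show ?thesis by blast
qed

text \<open>Two points of one orbit compare like their itineraries in \<open>alt_lex_less\<close>; when the
  itineraries coincide, the comparison is fixed by the parity of the common prefix together
  with the orientation of the self-rotation, which \<open>align\<close> forces to agree.\<close>

lemma orbit_order_transfer:
  assumes cyc: "cyclic_perm n p" and seg: "pmp_segmentation n p a b"
    and cyc': "cyclic_perm n p'" and seg': "pmp_segmentation n p' a' b'"
    and x: "x \<in> {1..n}" and x': "x' \<in> {1..n}"
    and w: "itinerary p a b n x = itinerary p' a' b' n x'"
    and align: "\<And>d. 0 < d \<Longrightarrow> d < n \<Longrightarrow> rotate d (itinerary p a b n x) = itinerary p a b n x \<Longrightarrow>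
                 x < (p ^^ d) x \<longleftrightarrow> x' < (p' ^^ d) x'"
    and jk: "j < n" "k < n" and less: "(p ^^ j) x < (p ^^ k) x"
  shows "(p' ^^ j) x' < (p' ^^ k) x'"
proof -
  let ?w = "itinerary p a b n x"
  have perm: "p permutes {1..n}" using cyc by (rule cyclic_perm_permutes)
  have perm': "p' permutes {1..n}" using cyc' by (rule cyclic_perm_permutes)
  have rot: "itinerary p a b n ((p ^^ i) x) = rotate i ?w" for i
    using itinerary_funpow[OF cyc x] .
  have rot': "itinerary p' a' b' n ((p' ^^ i) x') = rotate i ?w" for i
    using itinerary_funpow[OF cyc' x'] w by simp
  have inO: "(p ^^ i) x \<in> {1..n}" and inO': "(p' ^^ i) x' \<in> {1..n}" for i
    using cyclic_perm_funpow_in[OF cyc x] cyclic_perm_funpow_in[OF cyc' x'] by auto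
  have "j \<noteq> k" using less by auto
  then have ne': "(p' ^^ j) x' \<noteq> (p' ^^ k) x'" using cyclic_perm_funpow_inj[OF cyc' x' jk] by auto
  have "rotate j ?w = rotate k ?w \<or> alt_lex_less (rotate j ?w) (rotate k ?w)"
    using itinerary_order[OF seg perm inO inO less, of n] rot by simp
  then show ?thesis
  proof
    assume lex: "alt_lex_less (rotate j ?w) (rotate k ?w)"
    show ?thesis
    proof (rule ccontr)
      assume "\<not> (p' ^^ j) x' < (p' ^^ k) x'"
      then have "(p' ^^ k) x' < (p' ^^ j) x'" using ne' by simp
      then have "rotate k ?w = rotate j ?w \<or> alt_lex_less (rotate k ?w) (rotate j ?w)"
        using itinerary_order[OF seg' perm' inO' inO', of _ _ n] rot' by simp
      then show False using lex alt_lex_less_irrefl alt_lex_less_asym[of "rotate j ?w" "rotate k ?w"] by auto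
    qed
  next
    assume eq: "rotate j ?w = rotate k ?w"
    obtain d where d: "0 < d" "d < n" and rd: "rotate d ?w = ?w" and dj: "(j + d) mod n = k"
      using rotate_eq_rotate_offset[of j ?w k] jk \<open>j \<noteq> k\<close> eq by auto
    have xd: "(p ^^ d) x \<noteq> x" "(p' ^^ d) x' \<noteq> x'"
      using cyclic_perm_funpow_inj[OF cyc x, of d 0] cyclic_perm_funpow_inj[OF cyc' x', of d 0] d by auto
    have take_j: "take j (itinerary q c e n z) = itinerary q c e j z" for q c e z
      using jk by (simp add: take_itinerary)
    have prefix: "itinerary p a b j ((p ^^ d) x) = itinerary p a b j x"
      "itinerary p' a' b' j ((p' ^^ d) x') = itinerary p a b j x"
      "itinerary p' a' b' j x' = itinerary p a b j x"
      using take_j[of p a b "(p ^^ d) x"] take_j[of p' a' b' "(p' ^^ d) x'"] take_j[of p' a' b' x']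
        take_j[of p a b x] rot[of d] rot'[of d] rd w by simp_all
    have shift: "(p ^^ j) ((p ^^ d) x) = (p ^^ k) x" "(p' ^^ j) ((p' ^^ d) x') = (p' ^^ k) x'"
      using funpow_mod_eq[where f = p and n = n and x = x, of "j + d"]
        funpow_mod_eq[where f = p' and n = n and x = x', of "j + d"]
        cyclic_perm_funpow_self[OF cyc x] cyclic_perm_funpow_self[OF cyc' x'] dj
      by (simp_all add: funpow_add)
    show ?thesis
      using itinerary_parity[OF seg perm x inO xd(1)[symmetric] prefix(1)[symmetric]]
        itinerary_parity[where k = j, OF seg' perm' x' inO' xd(2)[symmetric]] prefix(2,3)
        shift less align[OF d rd] by simp
  qed
qed

lemma itinerary_inj_aligned:
  assumes cyc: "cyclic_perm n p" and seg: "pmp_segmentation n p a b"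
    and cyc': "cyclic_perm n p'" and seg': "pmp_segmentation n p' a' b'"
    and x: "x \<in> {1..n}" and x': "x' \<in> {1..n}"
    and w: "itinerary p a b n x = itinerary p' a' b' n x'"
    and align: "\<And>d. 0 < d \<Longrightarrow> d < n \<Longrightarrow> rotate d (itinerary p a b n x) = itinerary p a b n x \<Longrightarrow>
                 x < (p ^^ d) x \<longleftrightarrow> x' < (p' ^^ d) x'"
  shows "p = p' \<and> a = a' \<and> b = b'"
proof -
  have "a = a'" "b = b'"
    using itinerary_letter_counts[OF cyc seg x] itinerary_letter_counts[OF cyc' seg' x'] w by simp_all
  moreover have "p = p'"
    using cyclic_perm_eq_if_orbit_order[OF cyc cyc' x x'] orbit_order_transfer[OF assms] by blast
  ultimately show ?thesis by simp
qed

text \<open>A self-rotation by \<open>d\<close> has \<open>n = 2 * d\<close>, so it is unique, and replacing \<open>x'\<close> by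
  \<open>(p' ^^ d) x'\<close> reverses its orientation without changing the itinerary.\<close>

lemma itinerary_inj:
  assumes cyc: "cyclic_perm n p" and seg: "pmp_segmentation n p a b"
    and cyc': "cyclic_perm n p'" and seg': "pmp_segmentation n p' a' b'"
    and x: "x \<in> {1..n}" and x': "x' \<in> {1..n}"
    and w: "itinerary p a b n x = itinerary p' a' b' n x'"
  shows "p = p' \<and> a = a' \<and> b = b'"
proof (cases "\<exists>d. 0 < d \<and> d < n \<and> rotate d (itinerary p a b n x) = itinerary p a b n x")
  case False
  then show ?thesis using itinerary_inj_aligned[OF cyc seg cyc' seg' x x' w] by blast
next
  case True
  then obtain d where d: "0 < d" "d < n" "rotate d (itinerary p a b n x) = itinerary p a b n x"
    by blast
  have n: "n = 2 * d" using itinerary_self_rotation[OF cyc seg x d(3) d(1,2)] by simp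
  have unique: "d' = d" if "0 < d'" "d' < n" "rotate d' (itinerary p a b n x) = itinerary p a b n x"
    for d' using itinerary_self_rotation[OF cyc seg x that(3) that(1,2)] n by simp
  show ?thesis
  proof (cases "x < (p ^^ d) x \<longleftrightarrow> x' < (p' ^^ d) x'")
    case True
    then show ?thesis using itinerary_inj_aligned[OF cyc seg cyc' seg' x x' w] unique by blast
  next
    case False
    define x1 where "x1 = (p' ^^ d) x'"
    have x1: "x1 \<in> {1..n}" unfolding x1_def using cyclic_perm_funpow_in[OF cyc' x'] .
    have w1: "itinerary p a b n x = itinerary p' a' b' n x1"
      unfolding x1_def using itinerary_funpow[OF cyc' x'] w d by simp
    have "(p' ^^ d) x1 = (p' ^^ n) x'" unfolding x1_def n by (simp add: funpow_add mult_2)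
    then have return: "(p' ^^ d) x1 = x'" using cyclic_perm_funpow_self[OF cyc' x'] by simp
    have "x1 \<noteq> x'" using cyclic_perm_funpow_inj[OF cyc' x', of d 0] d unfolding x1_def by auto
    then have "x < (p ^^ d) x \<longleftrightarrow> x1 < (p' ^^ d) x1" using False return unfolding x1_def by auto
    then show ?thesis using itinerary_inj_aligned[OF cyc seg cyc' seg' x x1 w1] unique by blast
  qed
qed

section \<open>Realizing admissible words\<close>

text \<open>An admissible word is the itinerary of the permutation that sends the rank of the
  \<open>i\<close>-th rotation to the rank of the \<open>(i+1)\<close>-th, rotations being ranked by \<open>rotation_less\<close>.\<close>

definition admissible_word :: "nat list \<Rightarrow> bool" where
  "admissible_word w \<longleftrightarrow> (\<forall>i<length w. \<forall>j<length w. i \<noteq> j \<and> rotate i w = rotate j w \<longrightarrow>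
     odd (count_ones (take i w)) \<noteq> odd (count_ones (take j w)) \<and> even (count_ones w))"

definition rotation_less :: "nat list \<Rightarrow> nat \<Rightarrow> nat \<Rightarrow> bool" where
  "rotation_less w i j \<longleftrightarrow> alt_lex_less (rotate i w) (rotate j w) \<or>
     (rotate i w = rotate j w \<and> even (count_ones (take i w)) \<and> odd (count_ones (take j w)))"

definition rotation_rank :: "nat list \<Rightarrow> nat \<Rightarrow> nat" where
  "rotation_rank w i = Suc (card {j. j < length w \<and> rotation_less w j i})"

lemma rotation_less_irrefl: "\<not> rotation_less w i i"
  by (simp add: rotation_less_def alt_lex_less_irrefl)

lemma rotation_less_trans: "rotation_less w i j \<Longrightarrow> rotation_less w j k \<Longrightarrow> rotation_less w i k"
  unfolding rotation_less_def using alt_lex_less_trans[of "rotate i w" "rotate j w" "rotate k w"]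
  by auto

lemma rotation_less_total:
  assumes "admissible_word w" "i < length w" "j < length w" "i \<noteq> j"
  shows "rotation_less w i j \<or> rotation_less w j i"
  using assms alt_lex_less_total[of "rotate i w" "rotate j w"]
  unfolding admissible_word_def rotation_less_def by auto

lemma rotate_eq_nth_Cons: "i < length w \<Longrightarrow> rotate i w = w ! i # tl (rotate i w)"
proof -
  assume i: "i < length w"
  then have "w \<noteq> []" by auto
  then have "hd (rotate i w) = w ! i" using hd_rotate_conv_nth[of w i] i by simp
  moreover have "rotate i w \<noteq> []" using i by auto
  ultimately show ?thesis by (metis list.collapse)
qed

lemma rotation_less_nth_le:
  assumes "i < length w" "j < length w" "rotation_less w j i"
  shows "w ! j \<le> w ! i"
proof (cases "rotate j w = rotate i w")
  case True
  then show ?thesis using rotate_eq_nth_Cons[OF assms(1)] rotate_eq_nth_Cons[OF assms(2)]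
    by (metis list.inject order_refl)
next
  case False
  then have "alt_lex_less (rotate j w) (rotate i w)" using assms(3) by (simp add: rotation_less_def)
  then show ?thesis using rotate_eq_nth_Cons[OF assms(1)] rotate_eq_nth_Cons[OF assms(2)]
    by (metis alt_lex_less_Cons_le)
qed

lemma nth_less_rotation_less:
  assumes "i < length w" "j < length w" "w ! j < w ! i"
  shows "rotation_less w j i"
proof -
  have "alt_lex_less (w ! j # tl (rotate j w)) (w ! i # tl (rotate i w))" using assms(3) by simp
  then show ?thesis unfolding rotation_less_def
    using rotate_eq_nth_Cons[OF assms(1)] rotate_eq_nth_Cons[OF assms(2)] by simp
qed

lemma rotation_rank_less:
  assumes "i < length w" "j < length w" "rotation_less w i j"
  shows "rotation_rank w i < rotation_rank w j"
proof -
  let ?A = "{l. l < length w \<and> rotation_less w l i}" and ?B = "{l. l < length w \<and> rotation_less w l j}"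
  have "insert i ?A \<subseteq> ?B" using assms rotation_less_trans by auto
  then have "card (insert i ?A) \<le> card ?B" by (intro card_mono) auto
  moreover have "card (insert i ?A) = Suc (card ?A)" by (simp add: rotation_less_irrefl)
  ultimately show ?thesis unfolding rotation_rank_def by simp
qed

lemma rotation_rank_less_iff:
  assumes adm: "admissible_word w" and ij: "i < length w" "j < length w"
  shows "rotation_rank w i < rotation_rank w j \<longleftrightarrow> rotation_less w i j"
proof
  assume less: "rotation_rank w i < rotation_rank w j"
  then have "i \<noteq> j" by auto
  then show "rotation_less w i j"
    using rotation_less_total[OF adm ij] rotation_rank_less[OF ij(2,1)] less by auto
qed (rule rotation_rank_less[OF ij])

lemma bij_betw_rotation_rank:
  assumes adm: "admissible_word w"
  shows "bij_betw (rotation_rank w) {0..<length w} {1..length w}"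
proof -
  let ?n = "length w"
  have inj: "inj_on (rotation_rank w) {0..<?n}"
  proof (rule inj_onI, rule ccontr)
    fix i j assume "i \<in> {0..<?n}" "j \<in> {0..<?n}" "rotation_rank w i = rotation_rank w j" "i \<noteq> j"
    then show False using rotation_less_total[OF adm] rotation_rank_less by (metis atLeastLessThan_iff less_irrefl)
  qed
  have "rotation_rank w i \<in> {1..?n}" if "i < ?n" for i
  proof -
    have "{l. l < ?n \<and> rotation_less w l i} \<subseteq> {0..<?n} - {i}"
      by (auto simp: rotation_less_irrefl)
    then have "card {l. l < ?n \<and> rotation_less w l i} \<le> ?n - 1"
      using card_mono[of "{0..<?n} - {i}"] that by fastforce
    then show ?thesis unfolding rotation_rank_def using that by auto
  qed
  then have "rotation_rank w ` {0..<?n} \<subseteq> {1..?n}" by auto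
  moreover have "card (rotation_rank w ` {0..<?n}) = card {1..?n}" by (simp add: card_image[OF inj])
  ultimately show ?thesis using inj by (simp add: bij_betw_def card_subset_eq)
qed

definition realizing_perm :: "nat list \<Rightarrow> nat \<Rightarrow> nat" where
  "realizing_perm w z = (if z \<in> {1..length w}
     then rotation_rank w (Suc (the_inv_into {0..<length w} (rotation_rank w) z) mod length w) else z)"

lemma realizing_perm_rank:
  assumes adm: "admissible_word w" and i: "i < length w"
  shows "realizing_perm w (rotation_rank w i) = rotation_rank w (Suc i mod length w)"
  using i bij_betw_apply[OF bij_betw_rotation_rank[OF adm]]
    the_inv_into_f_f[OF bij_betw_imp_inj_on[OF bij_betw_rotation_rank[OF adm]]]
  by (simp add: realizing_perm_def)

lemma funpow_realizing_perm_rank: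
  assumes adm: "admissible_word w" and i: "i < length w"
  shows "(realizing_perm w ^^ k) (rotation_rank w i) = rotation_rank w ((i + k) mod length w)"
proof (induction k)
  case (Suc k)
  have "0 < length w" using i by linarith
  then have "(i + k) mod length w < length w" by simp
  then show ?case using Suc realizing_perm_rank[OF adm] by (simp add: mod_Suc_eq)
qed (use i in simp)

lemma rotation_rank_surj:
  assumes adm: "admissible_word w" and z: "z \<in> {1..length w}"
  obtains i where "i < length w" "z = rotation_rank w i"
  using bij_betw_imp_surj_on[OF bij_betw_rotation_rank[OF adm]] z by (metis atLeastLessThan_iff imageE)

lemma realizing_perm_cyclic:
  assumes adm: "admissible_word w"
  shows "cyclic_perm (length w) (realizing_perm w)"
proof -
  let ?n = "length w" and ?p = "realizing_perm w"
  have rank_in: "rotation_rank w i \<in> {1..?n}" if "i < ?n" for i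
    using bij_betw_apply[OF bij_betw_rotation_rank[OF adm]] that by simp
  have reach: "\<exists>k. (?p ^^ k) z = z'" if z: "z \<in> {1..?n}" "z' \<in> {1..?n}" for z z'
  proof -
    obtain i where i: "i < ?n" "z = rotation_rank w i" using rotation_rank_surj[OF adm z(1)] .
    obtain j where j: "j < ?n" "z' = rotation_rank w j" using rotation_rank_surj[OF adm z(2)] .
    have "(i + (?n - i + j)) mod ?n = j" using i j by simp
    then show ?thesis using funpow_realizing_perm_rank[OF adm i(1)] i j by metis
  qed
  have maps: "?p ` {1..?n} \<subseteq> {1..?n}"
  proof (rule image_subsetI)
    fix z assume "z \<in> {1..?n}"
    then obtain i where i: "i < ?n" "z = rotation_rank w i" using rotation_rank_surj[OF adm] by blast
    then have "0 < ?n" by linarith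
    then have "Suc i mod ?n < ?n" by simp
    then show "?p z \<in> {1..?n}" using i rank_in realizing_perm_rank[OF adm] by simp
  qed
  have "inj_on ?p {1..?n}"
  proof (rule inj_onI)
    fix z z' assume z: "z \<in> {1..?n}" "z' \<in> {1..?n}" and eq: "?p z = ?p z'"
    obtain i where i: "i < ?n" "z = rotation_rank w i" using rotation_rank_surj[OF adm z(1)] .
    obtain j where j: "j < ?n" "z' = rotation_rank w j" using rotation_rank_surj[OF adm z(2)] .
    have "0 < ?n" using i by linarith
    then have "Suc i mod ?n < ?n" "Suc j mod ?n < ?n" by simp_all
    then have "Suc i mod ?n = Suc j mod ?n"
      using eq i j realizing_perm_rank[OF adm] bij_betw_imp_inj_on[OF bij_betw_rotation_rank[OF adm]]
      by (simp add: inj_on_eq_iff)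
    then have "i = j" using i j by (cases "Suc i = ?n"; cases "Suc j = ?n") (auto simp: mod_if)
    then show "z = z'" using i j by simp
  qed
  then have "bij_betw ?p {1..?n} {1..?n}" using maps by (simp add: bij_betw_def endo_inj_surj)
  then have "?p permutes {1..?n}" by (rule bij_imp_permutes) (auto simp: realizing_perm_def)
  then show ?thesis using reach by (simp add: cyclic_perm_def)
qed

lemma rotation_rank_bounds:
  assumes i: "i < length w"
  shows "card {j. j < length w \<and> w ! j < w ! i} < rotation_rank w i"
    and "rotation_rank w i \<le> card {j. j < length w \<and> w ! j \<le> w ! i}"
proof -
  let ?A = "{j. j < length w \<and> rotation_less w j i}"
  have "{j. j < length w \<and> w ! j < w ! i} \<subseteq> ?A" using nth_less_rotation_less i by auto
  then have "card {j. j < length w \<and> w ! j < w ! i} \<le> card ?A" by (intro card_mono) auto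
  then show "card {j. j < length w \<and> w ! j < w ! i} < rotation_rank w i"
    by (simp add: rotation_rank_def)
  have "insert i ?A \<subseteq> {j. j < length w \<and> w ! j \<le> w ! i}" using rotation_less_nth_le i by auto
  then have "card (insert i ?A) \<le> card {j. j < length w \<and> w ! j \<le> w ! i}" by (intro card_mono) auto
  then show "rotation_rank w i \<le> card {j. j < length w \<and> w ! j \<le> w ! i}"
    by (simp add: rotation_rank_def rotation_less_irrefl)
qed

definition letters_le :: "nat list \<Rightarrow> nat \<Rightarrow> nat" where
  "letters_le w c = card {j. j < length w \<and> w ! j \<le> c}"

lemma segment_letter_rotation_rank:
  assumes w: "set w \<subseteq> {0..<3}" and i: "i < length w"
  shows "segment_letter (letters_le w 0) (letters_le w 1) (rotation_rank w i) = w ! i"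
proof -
  note bounds = rotation_rank_bounds[OF i]
  have "w ! i \<in> {0..<3}" using w i by (meson nth_mem subsetD)
  then consider "w ! i = 0" | "w ! i = 1" | "w ! i = 2" by fastforce
  then show ?thesis
  proof cases
    case 1
    then show ?thesis using bounds unfolding segment_letter_def letters_le_def by simp
  next
    case 2
    then have "{j. j < length w \<and> w ! j < w ! i} = {j. j < length w \<and> w ! j = 0}" by auto
    then show ?thesis using bounds 2 unfolding segment_letter_def letters_le_def by simp
  next
    case 3
    then have "{j. j < length w \<and> w ! j < w ! i} = {j. j < length w \<and> w ! j \<le> 1}" by auto
    moreover have "letters_le w 0 \<le> letters_le w 1" unfolding letters_le_def by (intro card_mono) auto
    ultimately show ?thesis using bounds 3 unfolding segment_letter_def letters_le_def by simp
  qed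
qed

lemma rotate_Suc_mod:
  assumes "i < length w"
  shows "rotate (Suc i mod length w) w = tl (rotate i w) @ [w ! i]"
proof -
  have "rotate (Suc i mod length w) w = rotate1 (rotate i w)" by (metis rotate_Suc rotate_conv_mod)
  also have "\<dots> = tl (rotate i w) @ [w ! i]" using rotate_eq_nth_Cons[OF assms] by (metis rotate1.simps(2))
  finally show ?thesis .
qed

lemma odd_count_ones_take_Suc_mod:
  assumes i: "i < length w" and even: "even (count_ones w)"
  shows "odd (count_ones (take (Suc i mod length w) w)) \<longleftrightarrow> odd (count_ones (take i w)) \<noteq> (w ! i = 1)"
proof (cases "Suc i < length w")
  case True
  then show ?thesis by (simp add: take_Suc_conv_app_nth)
next
  case False
  then have "Suc i = length w" using i by simp
  then have "count_ones w = count_ones (take i w) + count_ones [w ! i]"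
    by (metis count_ones_simps(3) lessI take_Suc_conv_app_nth take_all order_refl)
  then show ?thesis using even \<open>Suc i = length w\<close> by auto
qed

text \<open>Moving two rotations with the same first letter one step forward keeps their order,
  except after letter 1, which reverses it; this mirrors how \<open>p\<close> acts on the three segments.\<close>

lemma rotation_less_Suc_mod:
  assumes adm: "admissible_word w" and uv: "u < length w" "v < length w"
    and less: "rotation_less w u v" and same: "w ! u = w ! v"
  shows "if w ! u = 1 then rotation_less w (Suc v mod length w) (Suc u mod length w)
         else rotation_less w (Suc u mod length w) (Suc v mod length w)"
proof (cases "rotate u w = rotate v w")
  case False
  let ?c = "w ! u"
  have lex: "alt_lex_less (?c # tl (rotate u w)) (?c # tl (rotate v w))"
    using less False rotate_eq_nth_Cons[OF uv(1)] rotate_eq_nth_Cons[OF uv(2)] same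
    unfolding rotation_less_def by metis
  have ne: "tl (rotate u w) \<noteq> tl (rotate v w)"
    using False rotate_eq_nth_Cons[OF uv(1)] rotate_eq_nth_Cons[OF uv(2)] same by metis
  have len: "length (tl (rotate u w)) = length (tl (rotate v w))" by simp
  show ?thesis
    using lex alt_lex_less_append[OF len ne, of "[?c]" "[?c]"]
      alt_lex_less_append[OF len[symmetric] ne[symmetric], of "[?c]" "[?c]"]
      rotate_Suc_mod[OF uv(1)] rotate_Suc_mod[OF uv(2)] same
    unfolding rotation_less_def by (auto split: if_splits)
next
  case True
  then have "u \<noteq> v" "even (count_ones (take u w))" "odd (count_ones (take v w))"
    using less by (auto simp: rotation_less_def alt_lex_less_irrefl)
  moreover have "even (count_ones w)" using adm uv True \<open>u \<noteq> v\<close> unfolding admissible_word_def by blast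
  ultimately show ?thesis
    using odd_count_ones_take_Suc_mod[OF uv(1)] odd_count_ones_take_Suc_mod[OF uv(2)]
      rotate_Suc_mod[OF uv(1)] rotate_Suc_mod[OF uv(2)] True same
    unfolding rotation_less_def by auto
qed

lemma realizing_perm_step:
  assumes adm: "admissible_word w" and w: "set w \<subseteq> {0..<3}"
    and y: "y \<in> {1..length w}" "Suc y \<in> {1..length w}"
    and same: "segment_letter (letters_le w 0) (letters_le w 1) y =
      segment_letter (letters_le w 0) (letters_le w 1) (Suc y)"
  shows "if segment_letter (letters_le w 0) (letters_le w 1) y = 1
    then realizing_perm w (Suc y) < realizing_perm w y
    else realizing_perm w y < realizing_perm w (Suc y)"
proof -
  let ?n = "length w" and ?p = "realizing_perm w"
  obtain u where u: "u < ?n" "y = rotation_rank w u" using rotation_rank_surj[OF adm y(1)] .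
  obtain v where v: "v < ?n" "Suc y = rotation_rank w v" using rotation_rank_surj[OF adm y(2)] .
  have less: "rotation_less w u v" using rotation_rank_less_iff[OF adm u(1) v(1)] u v by simp
  have letters: "segment_letter (letters_le w 0) (letters_le w 1) y = w ! u" "w ! u = w ! v"
    using segment_letter_rotation_rank[OF w u(1)] segment_letter_rotation_rank[OF w v(1)] u v same
    by simp_all
  have "0 < ?n" using u by linarith
  then have "Suc u mod ?n < ?n" "Suc v mod ?n < ?n" by simp_all
  then show ?thesis
    using rotation_less_Suc_mod[OF adm u(1) v(1) less letters(2)] letters(1)
      realizing_perm_rank[OF adm u(1)] realizing_perm_rank[OF adm v(1)] u(2) v(2)
      rotation_rank_less_iff[OF adm] by (auto split: if_splits)
qed

lemma realizing_perm_segmentation: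
  assumes adm: "admissible_word w" and w: "set w \<subseteq> {0..<3}"
  shows "pmp_segmentation (length w) (realizing_perm w) (letters_le w 0) (letters_le w 1)"
proof -
  let ?a = "letters_le w 0" and ?b = "letters_le w 1" and ?n = "length w"
  have "?a \<le> ?b" unfolding letters_le_def by (intro card_mono) auto
  moreover have "?b \<le> card {0..<?n}" unfolding letters_le_def by (intro card_mono) auto
  ultimately have ab: "?a \<le> ?b" "?b \<le> ?n" by simp_all
  note step = realizing_perm_step[OF adm w]
  show ?thesis
    unfolding pmp_segmentation_def
  proof (intro conjI allI impI)
    fix j
    assume "0 < j \<and> j < ?a"
    then show "realizing_perm w j < realizing_perm w (Suc j)"
      using step[of j] ab by (simp add: segment_letter_def)
  next
    fix j
    assume "?a < j \<and> j < ?b"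
    then show "realizing_perm w (Suc j) < realizing_perm w j"
      using step[of j] ab by (simp add: segment_letter_def)
  next
    fix j
    assume "?b < j \<and> j < ?n"
    then show "realizing_perm w j < realizing_perm w (Suc j)"
      using step[of j] ab by (simp add: segment_letter_def)
  qed (use ab in auto)
qed

lemma itinerary_realizing_perm:
  assumes adm: "admissible_word w" and w: "set w \<subseteq> {0..<3}" and n: "0 < length w"
  shows "itinerary (realizing_perm w) (letters_le w 0) (letters_le w 1) (length w) (rotation_rank w 0) = w"
proof (rule nth_equalityI)
  fix k assume "k < length (itinerary (realizing_perm w) (letters_le w 0) (letters_le w 1)
    (length w) (rotation_rank w 0))"
  then have k: "k < length w" by simp
  then show "itinerary (realizing_perm w) (letters_le w 0) (letters_le w 1) (length w)
    (rotation_rank w 0) ! k = w ! k"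
    using funpow_realizing_perm_rank[OF adm n, of k] segment_letter_rotation_rank[OF w k]
    by (simp add: nth_itinerary)
qed simp

lemma admissible_word_realizable:
  assumes adm: "admissible_word w" and w: "set w \<subseteq> {0..<3}" and n: "0 < length w"
  obtains p a b where "cyclic_perm (length w) p" "pmp_segmentation (length w) p a b"
    "necklace (itinerary p a b (length w) 1) = necklace w"
proof
  let ?n = "length w" and ?p = "realizing_perm w" and ?a = "letters_le w 0" and ?b = "letters_le w 1"
  show cyc: "cyclic_perm ?n ?p" by (rule realizing_perm_cyclic[OF adm])
  show "pmp_segmentation ?n ?p ?a ?b" by (rule realizing_perm_segmentation[OF adm w])
  have one: "1 \<in> {1..?n}" using n by (simp add: Suc_le_eq)
  obtain k where "rotation_rank w 0 = (?p ^^ k) 1"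
    using bij_betw_imp_surj_on[OF cyclic_perm_orbit_bij[OF cyc one]]
      bij_betw_apply[OF bij_betw_rotation_rank[OF adm], of 0] n by force
  then have "w = rotate k (itinerary ?p ?a ?b ?n 1)"
    using itinerary_realizing_perm[OF adm w n] itinerary_funpow[OF cyc one] by simp
  then show "necklace (itinerary ?p ?a ?b ?n 1) = necklace w" by (metis necklace_rotate)
qed

lemma primitive_word_admissible: "primitive_word w \<Longrightarrow> admissible_word w"
  unfolding admissible_word_def using primitive_rotate_inj by blast

lemma rotate_append_self_eq:
  assumes prim: "primitive_word q" and ij: "i < j" "j < 2 * length q"
    and eq: "rotate i (q @ q) = rotate j (q @ q)"
  shows "j = i + length q"
proof -
  let ?m = "length q"
  have "rotate i q = rotate j q" using eq by (simp add: rotate_append_self append_eq_append_conv)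
  then have "rotate (i mod ?m) q = rotate (j mod ?m) q" by (metis rotate_conv_mod)
  moreover have "0 < ?m" using ij by linarith
  ultimately have mod: "i mod ?m = j mod ?m" using primitive_rotate_inj[OF prim] by simp
  have im: "i < ?m"
  proof (rule ccontr)
    assume "\<not> i < ?m"
    then have "i mod ?m = i - ?m" "j mod ?m = j - ?m" using ij by (auto simp: le_mod_geq)
    then show False using mod ij \<open>\<not> i < ?m\<close> by simp
  qed
  have mj: "?m \<le> j"
  proof (rule ccontr)
    assume "\<not> ?m \<le> j"
    then have "j mod ?m = j" by simp
    then show False using mod ij \<open>i < ?m\<close> by simp
  qed
  then have "j mod ?m = j - ?m" using ij by (simp add: le_mod_geq)
  then show ?thesis using mod im mj by simp
qed

lemma doubled_word_admissible:
  assumes prim: "primitive_word q" and odd: "odd (count_ones q)"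
  shows "admissible_word (q @ q)"
proof -
  have "odd (count_ones (take i (q @ q))) \<noteq> odd (count_ones (take j (q @ q)))"
    if "i < j" "j < 2 * length q" "rotate i (q @ q) = rotate j (q @ q)" for i j
  proof -
    have j: "j = i + length q" using rotate_append_self_eq[OF prim that] .
    then have "i < length q" using that(2) by linarith
    then have "take i (q @ q) = take i q" by simp
    moreover have "take j (q @ q) = q @ take i q" using j by simp
    ultimately show ?thesis using odd by (simp only: count_ones_simps(3)) simp
  qed
  note key = this
  show ?thesis unfolding admissible_word_def
  proof (intro allI impI)
    fix i j assume ij: "i < length (q @ q)" "j < length (q @ q)" and eq: "i \<noteq> j \<and> rotate i (q @ q) = rotate j (q @ q)"
    then consider "i < j" | "j < i" by linarith
    then have "odd (count_ones (take i (q @ q))) \<noteq> odd (count_ones (take j (q @ q)))"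
      using key[of i j] key[of j i] ij eq by cases auto
    then show "odd (count_ones (take i (q @ q))) \<noteq> odd (count_ones (take j (q @ q))) \<and>
        even (count_ones (q @ q))" using odd by simp
  qed
qed

definition doubled_necklaces :: "nat \<Rightarrow> nat list set set" where
  "doubled_necklaces n = {necklace (q @ q) | q.
     2 * length q = n \<and> set q \<subseteq> {0..<3} \<and> primitive_word q \<and> odd (count_ones q)}"

lemma finite_primitive_necklaces: "finite (primitive_necklaces k n)"
proof -
  have "words k n = {w. set w \<subseteq> {0..<k} \<and> length w = n}" unfolding words_def by auto
  then have "finite (words k n)" using finite_lists_length_eq[of "{0..<k}" n] by simp
  then show ?thesis unfolding primitive_necklaces_def by simp
qed

lemma finite_doubled_necklaces: "finite (doubled_necklaces n)"
proof -
  have "doubled_necklaces n \<subseteq> necklace ` {w. set w \<subseteq> {0..<3} \<and> length w = n}"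
    unfolding doubled_necklaces_def by auto
  moreover have "finite (necklace ` {w. set w \<subseteq> {0..<3::nat} \<and> length w = n})"
    by (intro finite_imageI finite_lists_length_eq) simp
  ultimately show ?thesis by (rule finite_subset)
qed

lemma primitive_doubled_necklaces_disjoint:
  "primitive_necklaces 3 n \<inter> doubled_necklaces n = {}"
proof -
  have False if prim: "primitive_word w" and eq: "necklace w = necklace (q @ q)" for w q :: "nat list"
  proof -
    obtain i where "w = rotate i (q @ q)" using eq by (auto simp: necklace_eq_iff)
    then have "w = rotate i q @ rotate i q" by (simp add: rotate_append_self)
    then show False using prim not_primitive_append_self by metis
  qed
  then show ?thesis unfolding primitive_necklaces_def doubled_necklaces_def by blast
qed

lemma inj_append_self: "inj (\<lambda>s :: 'a list. s @ s)"
proof (rule injI)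
  fix x y :: "'a list" assume eq: "x @ x = y @ y"
  have "length x + length x = length y + length y" using arg_cong[OF eq, of length] by simp
  then have "length x = length y" by simp
  then show "x = y" using eq by (simp add: append_eq_append_conv)
qed

lemma image_append_self_necklace: "(\<lambda>s. s @ s) ` necklace q = necklace (q @ q)"
  unfolding necklace_def by (auto simp: rotate_append_self)

lemma odd_o_sigma_necklace_iff:
  "(\<forall>s\<in>necklace q. odd (o_sigma [True, False, True] s)) \<longleftrightarrow> odd (count_ones q)"
  by (auto simp: necklace_def o_sigma_pmp)

lemma doubled_necklaces_eq_image:
  "doubled_necklaces (2 * m) = (\<lambda>N. (\<lambda>s. s @ s) ` N) `
     {N \<in> primitive_necklaces 3 m. \<forall>s\<in>N. odd (o_sigma [True, False, True] s)}"
    (is "_ = ?double ` ?LS")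
proof
  show "doubled_necklaces (2 * m) \<subseteq> ?double ` ?LS"
  proof
    fix M assume "M \<in> doubled_necklaces (2 * m)"
    then obtain q where q: "M = necklace (q @ q)" "length q = m" "set q \<subseteq> {0..<3}"
      "primitive_word q" "odd (count_ones q)" unfolding doubled_necklaces_def by auto
    have "q \<in> words 3 m" using q(2,3) by (auto simp: words_def)
    then have "necklace q \<in> primitive_necklaces 3 m" using q(4) unfolding primitive_necklaces_def by blast
    then have "necklace q \<in> ?LS" using odd_o_sigma_necklace_iff q(5) by blast
    moreover have "M = ?double (necklace q)" using q(1) by (simp add: image_append_self_necklace)
    ultimately show "M \<in> ?double ` ?LS" by blast
  qed
  show "?double ` ?LS \<subseteq> doubled_necklaces (2 * m)"
  proof
    fix M assume "M \<in> ?double ` ?LS"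
    then obtain N where N: "N \<in> ?LS" "M = ?double N" by blast
    then obtain q where q: "N = necklace q" "q \<in> words 3 m" "primitive_word q"
      unfolding primitive_necklaces_def by blast
    have "odd (count_ones q)" using N(1) q(1) odd_o_sigma_necklace_iff by blast
    moreover have "M = necklace (q @ q)" using N(2) q(1) by (simp add: image_append_self_necklace)
    moreover have "2 * length q = 2 * m" "set q \<subseteq> {0..<3}" using q(2) by (auto simp: words_def)
    ultimately show "M \<in> doubled_necklaces (2 * m)" unfolding doubled_necklaces_def using q(3) by blast
  qed
qed

lemma card_doubled_necklaces:
  "card (doubled_necklaces n) = (if even n then L_sig 3 (n div 2) [True, False, True] else 0)"
proof (cases "even n")
  case True
  let ?LS = "{N \<in> primitive_necklaces 3 (n div 2). \<forall>s\<in>N. odd (o_sigma [True, False, True] s)}"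
  have "inj_on (\<lambda>N. (\<lambda>s. s @ s) ` N) ?LS"
    by (rule inj_onI) (simp add: inj_image_eq_iff[OF inj_append_self])
  then have "card ((\<lambda>N. (\<lambda>s. s @ s) ` N) ` ?LS) = card ?LS" by (rule card_image)
  then show ?thesis
    using True doubled_necklaces_eq_image[of "n div 2"] unfolding L_sig_def by simp
next
  case False
  then have "doubled_necklaces n = {}" unfolding doubled_necklaces_def by auto
  then show ?thesis using False by simp
qed

lemma card_primitive_union_doubled:
  "card (primitive_necklaces 3 n \<union> doubled_necklaces n) = L_star 3 n [True, False, True]"
  using card_Un_disjoint[OF finite_primitive_necklaces finite_doubled_necklaces
      primitive_doubled_necklaces_disjoint]
  by (simp add: L_star_def L_def card_doubled_necklaces)

definition pmp_triples :: "nat \<Rightarrow> ((nat \<Rightarrow> nat) \<times> nat \<times> nat) set" where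
  "pmp_triples n = {(p, a, b). cyclic_perm n p \<and> pmp_segmentation n p a b}"

lemma card_pmp_triples:
  assumes n: "2 \<le> n"
  shows "card (pmp_triples n) = 4 * c3 n"
proof -
  define C where "C = {p. cyclic_perm n p \<and> in_sigma_class [True, False, True] n p}"
  have C: "C = {p. cyclic_perm n p \<and> (\<exists>a b. pmp_segmentation n p a b)}"
    unfolding C_def using in_pmp_class_iff cyclic_perm_permutes by blast
  have triples: "pmp_triples n = Sigma C (\<lambda>p. {(a, b). pmp_segmentation n p a b})"
    unfolding pmp_triples_def C by auto
  have "finite C"
    by (rule finite_subset[OF _ finite_permutations[of "{1..n}"]]) (use cyclic_perm_permutes in \<open>auto simp: C\<close>)
  moreover have "finite {(a, b). pmp_segmentation n p a b}" for p
    by (rule finite_subset[of _ "{0..n} \<times> {0..n}"]) (auto simp: pmp_segmentation_def)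
  ultimately have "card (pmp_triples n) = (\<Sum>p\<in>C. card {(a, b). pmp_segmentation n p a b})"
    unfolding triples by (simp add: card_SigmaI)
  also have "\<dots> = (\<Sum>p\<in>C. 4)"
    using card_pmp_segmentations[OF _ n] by (intro sum.cong) (auto simp: C)
  finally show ?thesis by (simp add: c3_def cyc_class_count_def C_def)
qed

lemma itinerary_not_primitive:
  assumes cyc: "cyclic_perm n p" and seg: "pmp_segmentation n p a b" and x: "x \<in> {1..n}"
    and not_prim: "\<not> primitive_word (itinerary p a b n x)"
  shows "\<exists>q. itinerary p a b n x = q @ q \<and> primitive_word q \<and> odd (count_ones q) \<and> 2 * length q = n"
proof -
  let ?w = "itinerary p a b n x"
  have period: "n = 2 * length q \<and> odd (count_ones (take (length q) ?w))"
    if "?w = concat (replicate r q)" "1 < r" for q r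
  proof -
    have "n = r * length q" using that by (metis length_itinerary length_concat_replicate)
    moreover have "0 < n" using x by auto
    ultimately have "0 < length q" "length q < n" using that(2) by auto
    moreover have "rotate (length q) ?w = ?w" using that rotate_concat_replicate[of r q] by simp
    ultimately show ?thesis using itinerary_self_rotation[OF cyc seg x] by blast
  qed
  obtain q r where qr: "?w = concat (replicate r q)" "1 < r"
    using not_prim unfolding primitive_word_def by auto
  have n: "n = 2 * length q" and odd: "odd (count_ones (take (length q) ?w))"
    using period[OF qr] by auto
  have "r * length q = 2 * length q" using qr(1) n by (metis length_itinerary length_concat_replicate)
  moreover have "0 < length q" using n x by auto
  ultimately have "r = 2" by simp
  then have w: "?w = q @ q" using qr by (simp add: numeral_2_eq_2)
  have "primitive_word q"
  proof (rule ccontr)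
    assume "\<not> primitive_word q"
    then obtain q' s where qs: "q = concat (replicate s q')" "1 < s"
      unfolding primitive_word_def by auto
    then have "?w = concat (replicate (s + s) q')" using w by (simp add: replicate_add)
    then have "n = 2 * length q'" using period qs(2) by simp
    moreover have "0 < length q'" using calculation x by auto
    ultimately show False using n qs by simp
  qed
  then show ?thesis using w odd n by auto
qed

lemma itinerary_word_in_necklaces:
  assumes cyc: "cyclic_perm n p" and seg: "pmp_segmentation n p a b" and x: "x \<in> {1..n}"
  shows "necklace (itinerary p a b n x) \<in> primitive_necklaces 3 n \<union> doubled_necklaces n"
proof (cases "primitive_word (itinerary p a b n x)")
  case True
  moreover have "itinerary p a b n x \<in> words 3 n" by (simp add: words_def set_itinerary)
  ultimately show ?thesis unfolding primitive_necklaces_def by blast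
next
  case False
  then obtain q where q: "itinerary p a b n x = q @ q" "primitive_word q" "odd (count_ones q)"
    "2 * length q = n"
    using itinerary_not_primitive[OF cyc seg x] by blast
  moreover have "set q \<subseteq> {0..<3}" using set_itinerary[of p a b n x] q(1) by auto
  ultimately show ?thesis unfolding doubled_necklaces_def by auto
qed

lemma necklace_realizable:
  assumes n: "0 < n" and N: "N \<in> primitive_necklaces 3 n \<union> doubled_necklaces n"
  obtains p a b where "cyclic_perm n p" "pmp_segmentation n p a b"
    "necklace (itinerary p a b n 1) = N"
proof -
  obtain w where w: "N = necklace w" "length w = n" "set w \<subseteq> {0..<3}" "admissible_word w"
  proof (cases "N \<in> primitive_necklaces 3 n")
    case True
    then show ?thesis
      using that primitive_word_admissible unfolding primitive_necklaces_def words_def by blast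
  next
    case False
    then obtain q where "N = necklace (q @ q)" "2 * length q = n" "set q \<subseteq> {0..<3}"
      "primitive_word q" "odd (count_ones q)"
      using N unfolding doubled_necklaces_def by blast
    then show ?thesis using that doubled_word_admissible by (simp add: mult_2)
  qed
  then show ?thesis using admissible_word_realizable[of w] n that by metis
qed

lemma bij_betw_pmp_triples_necklaces:
  assumes n: "0 < n"
  shows "bij_betw (\<lambda>(p, a, b). necklace (itinerary p a b n 1)) (pmp_triples n)
    (primitive_necklaces 3 n \<union> doubled_necklaces n)"
proof -
  have one: "1 \<in> {1..n}" using n by (simp add: Suc_le_eq)
  have "inj_on (\<lambda>(p, a, b). necklace (itinerary p a b n 1)) (pmp_triples n)"
  proof (rule inj_onI)
    fix t t' assume t: "t \<in> pmp_triples n" "t' \<in> pmp_triples n"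
      and eq: "(\<lambda>(p, a, b). necklace (itinerary p a b n 1)) t = (\<lambda>(p, a, b). necklace (itinerary p a b n 1)) t'"
    obtain p a b p' a' b' where tt: "t = (p, a, b)" "t' = (p', a', b')" by (cases t, cases t') auto
    have c: "cyclic_perm n p" "pmp_segmentation n p a b" "cyclic_perm n p'"
      "pmp_segmentation n p' a' b'" using t tt by (auto simp: pmp_triples_def)
    obtain i where "itinerary p' a' b' n 1 = rotate i (itinerary p a b n 1)"
      using eq tt necklace_eq_iff[of "itinerary p' a' b' n 1" "itinerary p a b n 1"] by auto
    then have "itinerary p a b n ((p ^^ i) 1) = itinerary p' a' b' n 1"
      using itinerary_funpow[OF c(1) one] by simp
    then show "t = t'"
      using itinerary_inj[OF c cyclic_perm_funpow_in[OF c(1) one] one] tt by simp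
  qed
  moreover have "(\<lambda>(p, a, b). necklace (itinerary p a b n 1)) ` pmp_triples n =
      primitive_necklaces 3 n \<union> doubled_necklaces n"
  proof
    show "(\<lambda>(p, a, b). necklace (itinerary p a b n 1)) ` pmp_triples n \<subseteq>
        primitive_necklaces 3 n \<union> doubled_necklaces n"
      using itinerary_word_in_necklaces[OF _ _ one] by (auto simp: pmp_triples_def)
    show "primitive_necklaces 3 n \<union> doubled_necklaces n \<subseteq>
        (\<lambda>(p, a, b). necklace (itinerary p a b n 1)) ` pmp_triples n"
    proof
      fix N assume "N \<in> primitive_necklaces 3 n \<union> doubled_necklaces n"
      then obtain p a b where "cyclic_perm n p" "pmp_segmentation n p a b"
        "necklace (itinerary p a b n 1) = N" using necklace_realizable[OF n] by metis
      then show "N \<in> (\<lambda>(p, a, b). necklace (itinerary p a b n 1)) ` pmp_triples n"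
        unfolding pmp_triples_def by force
    qed
  qed
  ultimately show ?thesis by (simp add: bij_betw_def)
qed

theorem theorem3p1:
  fixes n :: nat
  assumes "n \<ge> 3"
  shows "real (c3 n) = real (L_star 3 n [True, False, True]) / 4"
proof -
  have "4 * c3 n = card (pmp_triples n)" using card_pmp_triples assms by simp
  also have "\<dots> = card (primitive_necklaces 3 n \<union> doubled_necklaces n)"
    using bij_betw_same_card[OF bij_betw_pmp_triples_necklaces] assms by simp
  also have "\<dots> = L_star 3 n [True, False, True]" by (rule card_primitive_union_doubled)
  finally show ?thesis by simp
qed

end
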